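(* Let $q(\mathbf{x}_0)$ be a probability density on $\mathbb{R}^d$ with finite second moments, let $\overline{\alpha}_n\in(0,1)$, $\overline{\beta}_n=1-\overline{\alpha}_n$, and let $q(\mathbf{x}_n|\mathbf{x}_0)=\mathcal{N}(\mathbf{x}_n|\sqrt{\overline{\alpha}_n}\mathbf{x}_0,\overline{\beta}_n\mathbf{I})$, with $q_n$ the marginal density of $\mathbf{x}_n$. Then $$\mathbb{E}_{q_n(\mathbf{x}_n)}\mathrm{Cov}_{q(\mathbf{x}_0|\mathbf{x}_n)}[\mathbf{x}_0]=\frac{\overline{\beta}_n}{\overline{\alpha}_n}\Big(\mathbf{I}-\overline{\beta}_n\,\mathbb{E}_{q_n(\mathbf{x}_n)}\big[\nabla_{\mathbf{x}_n}\log q_n(\mathbf{x}_n)\nabla_{\mathbf{x}_n}\log q_n(\mathbf{x}_n)^\top\big]\Big),$$ and $$\mathrm{Cov}_{q(\mathbf{x}_0)}[\mathbf{x}_0]=\mathbb{E}_{q_n(\mathbf{x}_n)}\mathrm{Cov}_{q(\mathbf{x}_0|\mathbf{x}_n)}[\mathbf{x}_0]+\mathrm{Cov}_{q_n(\mathbf{x}_n)}\mathbb{E}_{q(\mathbf{x}_0|\mathbf{x}_n)}[\mathbf{x}_0].$$ *)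

theory Defs
  imports "HOL-Analysis.Analysis"
begin

text \<open>Vectors in R^d are modelled as real^'n with d = CARD('n).
  All densities are with respect to Lebesgue measure lborel.\<close>

definition gauss_iso :: "real^'n \<Rightarrow> real^'n \<Rightarrow> real \<Rightarrow> real" where
  "gauss_iso x m s =
     (2 * pi * s) powr (- real CARD('n) / 2) * exp (- (norm (x - m))\<^sup>2 / (2 * s))"

definition fwd_kernel :: "real \<Rightarrow> real^'n \<Rightarrow> real^'n \<Rightarrow> real" where
  "fwd_kernel a xn x0 = gauss_iso xn (sqrt a *\<^sub>R x0) (1 - a)"

definition marg :: "(real^'n \<Rightarrow> real) \<Rightarrow> real \<Rightarrow> real^'n \<Rightarrow> real" where
  "marg q0 a xn = (\<integral>x0. q0 x0 * fwd_kernel a xn x0 \<partial>lborel)"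

definition post :: "(real^'n \<Rightarrow> real) \<Rightarrow> real \<Rightarrow> real^'n \<Rightarrow> real^'n \<Rightarrow> real" where
  "post q0 a xn x0 = q0 x0 * fwd_kernel a xn x0 / marg q0 a xn"

definition dmean :: "(real^'n \<Rightarrow> real) \<Rightarrow> real^'n" where
  "dmean p = (\<integral>x. p x *\<^sub>R x \<partial>lborel)"

definition dcov :: "(real^'n \<Rightarrow> real) \<Rightarrow> 'n \<Rightarrow> 'n \<Rightarrow> real" where
  "dcov p i j = (\<integral>x. p x * ((x $ i - dmean p $ i) * (x $ j - dmean p $ j)) \<partial>lborel)"

definition dexp :: "(real^'n \<Rightarrow> real) \<Rightarrow> (real^'n \<Rightarrow> real) \<Rightarrow> real" where
  "dexp p f = (\<integral>x. p x * f x \<partial>lborel)"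

definition dexpv :: "(real^'n \<Rightarrow> real) \<Rightarrow> (real^'n \<Rightarrow> real^'m) \<Rightarrow> real^'m" where
  "dexpv p f = (\<integral>x. p x *\<^sub>R f x \<partial>lborel)"

definition dcov_fun :: "(real^'n \<Rightarrow> real) \<Rightarrow> (real^'n \<Rightarrow> real^'m) \<Rightarrow> 'm \<Rightarrow> 'm \<Rightarrow> real" where
  "dcov_fun p f i j =
     (\<integral>x. p x * ((f x $ i - dexpv p f $ i) * (f x $ j - dexpv p f $ j)) \<partial>lborel)"

definition grad :: "(real^'n \<Rightarrow> real) \<Rightarrow> real^'n \<Rightarrow> real^'n" where
  "grad f x = (\<chi> i. frechet_derivative f (at x) (axis i 1))"

definition score :: "(real^'n \<Rightarrow> real) \<Rightarrow> real \<Rightarrow> real^'n \<Rightarrow> real^'n" where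
  "score q0 a = grad (\<lambda>x. ln (marg q0 a x))"

definition prob_density_2 :: "(real^'n \<Rightarrow> real) \<Rightarrow> bool" where
  "prob_density_2 q0 \<longleftrightarrow>
     q0 \<in> borel_measurable lborel \<and> (\<forall>x. 0 \<le> q0 x) \<and>
     integrable lborel q0 \<and> (\<integral>x. q0 x \<partial>lborel) = 1 \<and>
     integrable lborel (\<lambda>x. q0 x * (norm x)\<^sup>2)"

end

theory Submission
  imports Defs "HOL-Probability.Probability"
begin

(* Write Z = q_n, M(y) = \<integral> q0(x) k(y,x) x dx and S(y) = \<integral> q0(x) k(y,x) x x^T dx for the
   Gaussian kernel k(y,x) = q(y|x), so that the posterior q(x|y) has mean M/Z and second moment
   S/Z.  Differentiating under the integral sign gives Tweedie's formula
   grad Z = (sqrt a M - y Z) / (1 - a), so the score is (sqrt a M/Z - y) / (1 - a).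
   By Fubini and the first two moments of k(., x), every expectation over q_n is then an affine
   combination of the moments mu = E x and Q = E x x^T of q0 and of J = \<integral> M M^T / Z:
   the expected posterior covariance is Q - J, the expected outer product of the score is
   (a J - a Q + (1 - a) I) / (1 - a)^2, and the covariance of the posterior mean is J - mu mu^T,
   while Cov q0 = Q - mu mu^T.  Both identities follow by linear algebra. *)

section \<open>Moments of the Gaussian kernel\<close>

lemma gauss_iso_eq_prod_normal_density:
  fixes z m :: "real^'n"
  assumes s: "0 < s"
  shows "gauss_iso z m s = (\<Prod>b\<in>Basis. normal_density (m \<bullet> b) (sqrt s) (z \<bullet> b))"
proof -
  have norm_sq: "(norm (z - m))\<^sup>2 = (\<Sum>b\<in>Basis. (z \<bullet> b - m \<bullet> b)\<^sup>2)"
    unfolding power2_norm_eq_inner euclidean_inner[of "z-m" "z-m"]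
    by (simp add: inner_diff_left power2_eq_square)
  have "(2 * pi * s) powr (- real CARD('n) / 2)
      = (\<Prod>b\<in>(Basis :: (real^'n) set). 1 / sqrt (2 * pi * s))"
  proof -
    have "(2 * pi * s) powr (- real CARD('n) / 2) = ((2 * pi * s) powr (-1/2)) ^ CARD('n)"
      using s by (simp add: powr_realpow[symmetric] powr_powr)
    also have "(2 * pi * s) powr (-1/2) = 1 / sqrt (2 * pi * s)"
      using s by (simp add: powr_minus_divide powr_half_sqrt)
    finally show ?thesis by simp
  qed
  moreover have "exp (- (norm (z - m))\<^sup>2 / (2 * s))
      = (\<Prod>b\<in>(Basis :: (real^'n) set). exp (- (z \<bullet> b - m \<bullet> b)\<^sup>2 / (2 * s)))"
    by (simp add: norm_sq exp_sum[symmetric] sum_divide_distrib[symmetric] sum_negf)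
  moreover have "(\<Prod>b\<in>Basis. normal_density (m \<bullet> b) (sqrt s) (z \<bullet> b)) =
     (\<Prod>b\<in>(Basis :: (real^'n) set). 1 / sqrt (2 * pi * s)) *
     (\<Prod>b\<in>(Basis :: (real^'n) set). exp (- (z \<bullet> b - m \<bullet> b)\<^sup>2 / (2 * s)))"
    unfolding prod.distrib[symmetric] normal_density_def using s by simp
  ultimately show ?thesis
    by (simp add: gauss_iso_def)
qed

lemma lborel_integral_prod_Basis:
  fixes f :: "'a::euclidean_space \<Rightarrow> real \<Rightarrow> real"
  assumes int: "\<And>b. b \<in> Basis \<Longrightarrow> integrable lborel (f b)"
  shows "integrable lborel (\<lambda>x::'a. \<Prod>b\<in>Basis. f b (x \<bullet> b))"
    and "(\<integral>x. (\<Prod>b\<in>Basis. f b (x \<bullet> b)) \<partial>(lborel::'a measure))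
         = (\<Prod>b\<in>Basis. integral\<^sup>L lborel (f b))"
proof -
  interpret P: product_sigma_finite "\<lambda>_::'a. lborel :: real measure"
    by standard
  have [measurable]: "\<And>b. b \<in> Basis \<Longrightarrow> f b \<in> borel_measurable borel"
    using borel_measurable_integrable[OF int] by simp
  have meas_prod: "(\<lambda>x::'a. \<Prod>b\<in>Basis. f b (x \<bullet> b)) \<in> borel_measurable borel"
    by measurable
  have meas_sum: "(\<lambda>g. \<Sum>b\<in>Basis. g b *\<^sub>R b)
      \<in> measurable (\<Pi>\<^sub>M b\<in>(Basis::'a set). (lborel::real measure)) borel"
    by measurable
  have coords: "\<And>g. (\<Prod>b\<in>Basis. f b ((\<Sum>c\<in>Basis. g c *\<^sub>R c) \<bullet> b))
      = (\<Prod>b\<in>(Basis::'a set). f b (g b))"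
    by (intro prod.cong refl)
      (simp add: inner_sum_left inner_Basis if_distrib sum.delta cong: if_cong)
  have "integrable (\<Pi>\<^sub>M b\<in>(Basis::'a set). (lborel::real measure)) (\<lambda>g. \<Prod>b\<in>Basis. f b (g b))"
    by (rule P.product_integrable_prod) (auto intro: int)
  then show "integrable lborel (\<lambda>x::'a. \<Prod>b\<in>Basis. f b (x \<bullet> b))"
    by (subst lborel_eq[where 'a='a], subst integrable_distr_eq[OF meas_sum meas_prod])
      (simp add: coords)
  show "(\<integral>x. (\<Prod>b\<in>Basis. f b (x \<bullet> b)) \<partial>(lborel::'a measure))
      = (\<Prod>b\<in>Basis. integral\<^sup>L lborel (f b))"
    by (subst lborel_eq[where 'a='a], subst integral_distr[OF meas_sum meas_prod], simp add: coords)
      (rule P.product_integral_prod, auto intro: int)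
qed

lemma gauss_iso_prod_integral:
  fixes m :: "real^'n"
  assumes s: "0 < s"
    and int: "\<And>b. b \<in> Basis \<Longrightarrow> integrable lborel (\<lambda>t. normal_density (m \<bullet> b) (sqrt s) t * g b t)"
  shows "integrable lborel (\<lambda>z. gauss_iso z m s * (\<Prod>b\<in>Basis. g b (z \<bullet> b)))"
    and "(\<integral>z. gauss_iso z m s * (\<Prod>b\<in>Basis. g b (z \<bullet> b)) \<partial>lborel)
         = (\<Prod>b\<in>Basis. \<integral>t. normal_density (m \<bullet> b) (sqrt s) t * g b t \<partial>lborel)"
proof -
  have eq: "(\<lambda>z. gauss_iso z m s * (\<Prod>b\<in>Basis. g b (z \<bullet> b)))
     = (\<lambda>z. \<Prod>b\<in>Basis. (\<lambda>t. normal_density (m \<bullet> b) (sqrt s) t * g b t) (z \<bullet> b))"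
    by (simp add: gauss_iso_eq_prod_normal_density[OF s] prod.distrib)
  show "integrable lborel (\<lambda>z. gauss_iso z m s * (\<Prod>b\<in>Basis. g b (z \<bullet> b)))"
    unfolding eq by (rule lborel_integral_prod_Basis(1)) (rule int)
  show "(\<integral>z. gauss_iso z m s * (\<Prod>b\<in>Basis. g b (z \<bullet> b)) \<partial>lborel)
         = (\<Prod>b\<in>Basis. \<integral>t. normal_density (m \<bullet> b) (sqrt s) t * g b t \<partial>lborel)"
    unfolding eq by (rule lborel_integral_prod_Basis(2)) (rule int)
qed

lemma normal_density_second_moment:
  assumes "0 < \<sigma>"
  shows "integrable lborel (\<lambda>t. normal_density \<mu> \<sigma> t * (t * t))"
    and "(\<integral>t. normal_density \<mu> \<sigma> t * (t * t) \<partial>lborel) = \<sigma>\<^sup>2 + \<mu>\<^sup>2"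
proof -
  have split: "\<And>t. normal_density \<mu> \<sigma> t * (t * t) = normal_density \<mu> \<sigma> t * (t - \<mu>)^(2*1)
      + 2 * \<mu> * (normal_density \<mu> \<sigma> t * t) - \<mu>\<^sup>2 * normal_density \<mu> \<sigma> t"
    by (simp add: algebra_simps power2_eq_square)
  have central: "integrable lborel (\<lambda>t. normal_density \<mu> \<sigma> t * (t - \<mu>)^(2*1))"
    using integrable_normal_moment[OF assms] by blast
  have first: "integrable lborel (\<lambda>t. normal_density \<mu> \<sigma> t * t)"
    using integrable_normal_moment_nz_1[OF assms] .
  have variance: "(\<integral>t. normal_density \<mu> \<sigma> t * (t - \<mu>)^(2*1) \<partial>lborel) = \<sigma>\<^sup>2"
    using integral_normal_moment_even[OF assms, of \<mu> 1] assms by (simp add: power2_eq_square)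
  show "integrable lborel (\<lambda>t. normal_density \<mu> \<sigma> t * (t * t))"
    unfolding split using central first integrable_normal_density[OF assms] by auto
  show "(\<integral>t. normal_density \<mu> \<sigma> t * (t * t) \<partial>lborel) = \<sigma>\<^sup>2 + \<mu>\<^sup>2"
    unfolding split using central first variance integral_normal_moment_nz_1[OF assms, of \<mu>]
      integrable_normal_density[OF assms] integral_normal_density[OF assms]
    by (simp add: power2_eq_square)
qed

lemma gauss_iso_moment0:
  fixes m :: "real^'n"
  assumes s: "0 < s"
  shows "integrable lborel (\<lambda>z. gauss_iso z m s)"
    and "(\<integral>z. gauss_iso z m s \<partial>lborel) = 1"
proof -
  have si: "0 < sqrt s" using s by simp
  note G = gauss_iso_prod_integral[OF s, of m "\<lambda>b t. 1"]
  show "integrable lborel (\<lambda>z. gauss_iso z m s)"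
    using G(1) integrable_normal_density[OF si] by simp
  show "(\<integral>z. gauss_iso z m s \<partial>lborel) = 1"
    using G(2) integrable_normal_density[OF si] integral_normal_density[OF si] by simp
qed

lemma gauss_iso_moment1:
  fixes m :: "real^'n"
  assumes s: "0 < s"
  shows "integrable lborel (\<lambda>z. gauss_iso z m s * z$i)"
    and "(\<integral>z. gauss_iso z m s * z$i \<partial>lborel) = m$i"
proof -
  have si: "0 < sqrt s" using s by simp
  define g where "g = (\<lambda>(b::real^'n) t::real. if b = axis i 1 then t else 1)"
  have prod_g: "\<And>z::real^'n. (\<Prod>b\<in>Basis. g b (z \<bullet> b)) = z$i"
    unfolding g_def by (simp add: prod.delta cart_eq_inner_axis)
  have int_g: "integrable lborel (\<lambda>t. normal_density (m \<bullet> b) (sqrt s) t * g b t)" for b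
    unfolding g_def using integrable_normal_density[OF si] integrable_normal_moment_nz_1[OF si]
    by (cases "b = axis i 1") auto
  have integral_g: "\<And>b. (\<integral>t. normal_density (m \<bullet> b) (sqrt s) t * g b t \<partial>lborel)
      = (if b = axis i 1 then m \<bullet> b else 1)"
    unfolding g_def using integral_normal_density[OF si] integral_normal_moment_nz_1[OF si] by auto
  note G = gauss_iso_prod_integral[OF s, of m g, OF int_g]
  show "integrable lborel (\<lambda>z. gauss_iso z m s * z$i)"
    using G(1) by (simp add: prod_g)
  show "(\<integral>z. gauss_iso z m s * z$i \<partial>lborel) = m$i"
    using G(2) by (simp add: prod_g integral_g prod.delta cart_eq_inner_axis)
qed

lemma gauss_iso_moment2:
  fixes m :: "real^'n"
  assumes s: "0 < s"
  shows "integrable lborel (\<lambda>z. gauss_iso z m s * (z$i * z$j))"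
    and "(\<integral>z. gauss_iso z m s * (z$i * z$j) \<partial>lborel) = m$i * m$j + (if i = j then s else 0)"
proof -
  have si: "0 < sqrt s" using s by simp
  define g where "g = (\<lambda>(b::real^'n) t::real.
    (if b = axis i 1 then t else 1) * (if b = axis j 1 then t else 1))"
  define c where "c = (\<lambda>b::real^'n. if b = axis i 1 then (if b = axis j 1 then s + (m \<bullet> b)\<^sup>2 else m \<bullet> b)
    else if b = axis j 1 then m \<bullet> b else 1)"
  have prod_g: "\<And>z::real^'n. (\<Prod>b\<in>Basis. g b (z \<bullet> b)) = z$i * z$j"
    unfolding g_def by (simp add: prod.distrib prod.delta cart_eq_inner_axis)
  have int_g: "integrable lborel (\<lambda>t. normal_density (m \<bullet> b) (sqrt s) t * g b t)" for b
    unfolding g_def using integrable_normal_density[OF si] integrable_normal_moment_nz_1[OF si]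
      normal_density_second_moment(1)[OF si]
    by (cases "b = axis i 1"; cases "b = axis j 1") auto
  have integral_g: "\<And>b. (\<integral>t. normal_density (m \<bullet> b) (sqrt s) t * g b t \<partial>lborel) = c b"
    unfolding g_def c_def using integral_normal_density[OF si] integral_normal_moment_nz_1[OF si]
      normal_density_second_moment(2)[OF si] s by auto
  note G = gauss_iso_prod_integral[OF s, of m g, OF int_g]
  show "integrable lborel (\<lambda>z. gauss_iso z m s * (z$i * z$j))"
    using G(1) by (simp add: prod_g)
  have "(\<integral>z. gauss_iso z m s * (z$i * z$j) \<partial>lborel) = (\<Prod>b\<in>Basis. c b)"
    using G(2) by (simp add: prod_g integral_g)
  also have "\<dots> = m$i * m$j + (if i = j then s else 0)"
  proof (cases "i = j")
    case True
    then have "(\<Prod>b\<in>Basis. c b) = (\<Prod>b\<in>(Basis::(real^'n) set). if b = axis i 1 then s + (m \<bullet> b)\<^sup>2 else 1)"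
      by (intro prod.cong) (auto simp: c_def)
    then show ?thesis using True by (simp add: prod.delta cart_eq_inner_axis power2_eq_square)
  next
    case False
    then have "axis i (1::real) \<noteq> axis j 1" by (simp add: axis_eq_axis)
    then have "(\<Prod>b\<in>Basis. c b)
        = (\<Prod>b\<in>(Basis::(real^'n) set). (if b = axis i 1 then m \<bullet> b else 1) * (if b = axis j 1 then m \<bullet> b else 1))"
      by (intro prod.cong) (auto simp: c_def)
    then show ?thesis using False by (simp add: prod.distrib prod.delta cart_eq_inner_axis)
  qed
  finally show "(\<integral>z. gauss_iso z m s * (z$i * z$j) \<partial>lborel) = m$i * m$j + (if i = j then s else 0)" .
qed

lemma fwd_kernel_pos: "a < 1 \<Longrightarrow> 0 < fwd_kernel a y x"
  by (simp add: fwd_kernel_def gauss_iso_def)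

lemma fwd_kernel_le:
  fixes x y :: "real^'n"
  assumes "a < 1"
  shows "fwd_kernel a y x \<le> (2 * pi * (1 - a)) powr (- real CARD('n) / 2)"
proof -
  have "exp (- (norm (y - sqrt a *\<^sub>R x))\<^sup>2 / (2 * (1 - a))) \<le> 1"
    using assms by (simp add: divide_nonpos_pos)
  then show ?thesis
    unfolding fwd_kernel_def gauss_iso_def by (intro mult_left_le) auto
qed

lemma fwd_kernel_measurable [measurable]:
  "(\<lambda>p. fwd_kernel a (snd p) (fst p)) \<in> borel_measurable (lborel \<Otimes>\<^sub>M lborel)"
  "(\<lambda>x. fwd_kernel a y x) \<in> borel_measurable borel"
  "(\<lambda>y. fwd_kernel a y x) \<in> borel_measurable borel"
  unfolding fwd_kernel_def gauss_iso_def by (measurable, measurable, measurable)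

lemma fwd_kernel_moment0:
  fixes x :: "real^'n"
  assumes "a < 1"
  shows "integrable lborel (\<lambda>y. fwd_kernel a y x)"
    and "(\<integral>y. fwd_kernel a y x \<partial>lborel) = 1"
  unfolding fwd_kernel_def using gauss_iso_moment0[of "1 - a" "sqrt a *\<^sub>R x"] assms by auto

lemma fwd_kernel_moment1:
  fixes x :: "real^'n"
  assumes "a < 1"
  shows "integrable lborel (\<lambda>y. fwd_kernel a y x * y$i)"
    and "(\<integral>y. fwd_kernel a y x * y$i \<partial>lborel) = sqrt a * x$i"
  unfolding fwd_kernel_def using gauss_iso_moment1[of "1 - a" "sqrt a *\<^sub>R x" i] assms by auto

lemma fwd_kernel_moment2:
  fixes x :: "real^'n"
  assumes "0 \<le> a" "a < 1"
  shows "integrable lborel (\<lambda>y. fwd_kernel a y x * (y$i * y$j))"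
    and "(\<integral>y. fwd_kernel a y x * (y$i * y$j) \<partial>lborel)
         = a * (x$i * x$j) + (if i = j then 1 - a else 0)"
proof -
  show "integrable lborel (\<lambda>y. fwd_kernel a y x * (y$i * y$j))"
    unfolding fwd_kernel_def using gauss_iso_moment2(1)[of "1 - a" "sqrt a *\<^sub>R x" i j] assms by auto
  have "sqrt a * sqrt a = a" using assms by simp
  then show "(\<integral>y. fwd_kernel a y x * (y$i * y$j) \<partial>lborel)
      = a * (x$i * x$j) + (if i = j then 1 - a else 0)"
    unfolding fwd_kernel_def using gauss_iso_moment2(2)[of "1 - a" "sqrt a *\<^sub>R x" i j] assms
    by (simp add: algebra_simps)
qed

lemma fwd_kernel_norm_sq_moment:
  fixes x :: "real^'n"
  assumes "0 \<le> a" "a < 1"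
  shows "integrable lborel (\<lambda>y. fwd_kernel a y x * (norm y)\<^sup>2)"
    and "(\<integral>y. fwd_kernel a y x * (norm y)\<^sup>2 \<partial>lborel) = a * (norm x)\<^sup>2 + real CARD('n) * (1 - a)"
proof -
  have norm_sq: "\<And>z::real^'n. (norm z)\<^sup>2 = (\<Sum>l\<in>UNIV. z$l * z$l)"
    by (simp add: power2_norm_eq_inner inner_vec_def)
  have eq: "(\<lambda>y. fwd_kernel a y x * (norm y)\<^sup>2) = (\<lambda>y. \<Sum>l\<in>UNIV. fwd_kernel a y x * (y$l * y$l))"
    by (simp add: norm_sq sum_distrib_left)
  show "integrable lborel (\<lambda>y. fwd_kernel a y x * (norm y)\<^sup>2)"
    unfolding eq by (rule Bochner_Integration.integrable_sum) (rule fwd_kernel_moment2(1)[OF assms])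
  have "(\<integral>y. fwd_kernel a y x * (norm y)\<^sup>2 \<partial>lborel) = (\<Sum>l\<in>UNIV. a * (x$l * x$l) + (1 - a))"
    unfolding eq by (subst Bochner_Integration.integral_sum) (auto simp: fwd_kernel_moment2[OF assms])
  also have "\<dots> = a * (norm x)\<^sup>2 + real CARD('n) * (1 - a)"
    by (simp add: sum.distrib norm_sq sum_distrib_left)
  finally show "(\<integral>y. fwd_kernel a y x * (norm y)\<^sup>2 \<partial>lborel) = a * (norm x)\<^sup>2 + real CARD('n) * (1 - a)" .
qed

section \<open>Differentiability of the Gaussian kernel\<close>

lemma exp_neg_mult_le_one: "exp (- r) * r \<le> (1::real)"
proof -
  have "r \<le> exp r" using exp_ge_add_one_self[of r] by linarith
  then show ?thesis by (simp add: exp_minus field_simps)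
qed

lemma exp_neg_quadratic_second_deriv_bound:
  fixes b C P Q :: real
  assumes b: "0 < b" and C: "0 \<le> C" and Q: "0 \<le> Q" and PCQ: "P\<^sup>2 \<le> C * Q"
  shows "\<bar>exp (- Q / (2 * b)) * (P\<^sup>2 / b\<^sup>2 - C / b)\<bar> \<le> 2 * C / b"
proof -
  define \<psi> where "\<psi> = exp (- Q / (2 * b))"
  have \<psi>: "0 < \<psi>" "\<psi> \<le> 1" using b Q by (auto simp: \<psi>_def)
  have "\<psi> * (P\<^sup>2 / b\<^sup>2) \<le> \<psi> * (C * Q / b\<^sup>2)"
    using \<psi> PCQ by (intro mult_left_mono divide_right_mono) auto
  also have "\<dots> = 2 * C / b * (exp (- (Q / (2 * b))) * (Q / (2 * b)))"
    using b by (simp add: \<psi>_def field_simps power2_eq_square)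
  also have "\<dots> \<le> 2 * C / b"
    using exp_neg_mult_le_one[of "Q / (2 * b)"] b C by (intro mult_left_le) auto
  finally have "\<psi> * (P\<^sup>2 / b\<^sup>2) \<le> 2 * C / b" .
  moreover have "\<psi> * (C / b) \<le> C / b"
    using \<psi> b C by (intro mult_left_le_one_le) auto
  moreover have "C / b \<le> 2 * C / b"
    using b C by (simp add: divide_right_mono)
  moreover have "0 \<le> \<psi> * (P\<^sup>2 / b\<^sup>2)" "0 \<le> \<psi> * (C / b)"
    using \<psi> b C by auto
  ultimately show ?thesis
    unfolding \<psi>_def[symmetric] right_diff_distrib abs_le_iff by linarith
qed

lemma exp_neg_quadratic_maclaurin:
  fixes A B C b :: real
  assumes b: "0 < b"
  obtains t where "exp (-(A + 2*B + C)/(2*b)) - exp (-A/(2*b)) + exp (-A/(2*b)) * B / b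
    = exp (- (A + 2*B*t + C*t\<^sup>2) / (2*b)) * ((B + C*t)\<^sup>2/b\<^sup>2 - C/b) / 2"
proof -
  define \<psi> where "\<psi> t = exp (- (A + 2*B*t + C*t\<^sup>2) / (2*b))" for t
  define d1 where "d1 t = \<psi> t * (-(B + C*t)/b)" for t
  define d2 where "d2 t = \<psi> t * ((B + C*t)\<^sup>2/b\<^sup>2 - C/b)" for t
  have D\<psi>: "DERIV \<psi> t :> d1 t" for t
    unfolding \<psi>_def d1_def using b
    by (auto intro!: derivative_eq_intros simp: field_simps power2_eq_square)
  have Dd1: "DERIV d1 t :> d2 t" for t
  proof -
    have "DERIV (\<lambda>t. -(B + C*t)/b) t :> -C/b"
      using b by (auto intro!: derivative_eq_intros simp: field_simps)
    from DERIV_mult[OF D\<psi> this] have "DERIV d1 t :> d1 t * (-(B + C*t)/b) + (- C / b) * \<psi> t"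
      by (simp add: d1_def[abs_def])
    moreover have "d1 t * (-(B + C*t)/b) + (- C / b) * \<psi> t = d2 t"
      unfolding d1_def d2_def using b by (simp add: field_simps power2_eq_square)
    ultimately show ?thesis by simp
  qed
  define diff where "diff m = (if m = 0 then \<psi> else if m = 1 then d1 else d2)" for m :: nat
  have "\<forall>m t. m < 2 \<and> 0 \<le> t \<and> t \<le> 1 \<longrightarrow> DERIV (diff m) t :> diff (Suc m) t"
    using D\<psi> Dd1 by (auto simp: diff_def less_2_cases_iff)
  then obtain t where "\<psi> 1 = (\<Sum>m<2. diff m 0 / fact m * 1 ^ m) + diff 2 t / fact 2 * 1 ^ 2"
    using Maclaurin[of 1 2 diff \<psi>] by (auto simp: diff_def)
  then show thesis
    by (intro that[of t]) (simp add: diff_def eval_nat_numeral \<psi>_def d1_def d2_def)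
qed

lemma exp_neg_quadratic_taylor:
  fixes A B C b :: real
  assumes b: "0 < b" and A: "0 \<le> A" and C: "0 \<le> C" and BAC: "B\<^sup>2 \<le> A * C"
  shows "\<bar>exp (-(A + 2*B + C)/(2*b)) - exp (-A/(2*b)) + exp (-A/(2*b)) * B / b\<bar> \<le> C / b"
proof -
  obtain t where remainder: "exp (-(A + 2*B + C)/(2*b)) - exp (-A/(2*b)) + exp (-A/(2*b)) * B / b
    = exp (- (A + 2*B*t + C*t\<^sup>2) / (2*b)) * ((B + C*t)\<^sup>2/b\<^sup>2 - C/b) / 2"
    using exp_neg_quadratic_maclaurin[OF b] .
  define Q where "Q = A + 2*B*t + C*t\<^sup>2"
  have completed_square: "C * Q = (B + C*t)\<^sup>2 + (A*C - B\<^sup>2)"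
    by (simp add: Q_def algebra_simps power2_eq_square)
  have "0 \<le> Q"
  proof (cases "C = 0")
    case True
    then show ?thesis using BAC A by (simp add: Q_def)
  next
    case False
    have "0 \<le> C * Q"
      using completed_square BAC by simp
    then show ?thesis
      using False C by (simp add: zero_le_mult_iff)
  qed
  moreover have "(B + C*t)\<^sup>2 \<le> C * Q"
    using completed_square BAC by simp
  ultimately have "\<bar>exp (- Q / (2 * b)) * ((B + C*t)\<^sup>2 / b\<^sup>2 - C / b)\<bar> \<le> 2 * C / b"
    by (rule exp_neg_quadratic_second_deriv_bound[OF b C])
  then show ?thesis
    unfolding remainder Q_def using b by (simp add: field_simps)
qed

(* The bound is uniform in x and y; this is what allows differentiating q_n under the integral sign. *)
lemma fwd_kernel_taylor:
  fixes x y h :: "real^'n"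
  assumes a1: "a < 1"
  shows "\<bar>fwd_kernel a (y + h) x - fwd_kernel a y x
           - fwd_kernel a y x * (((sqrt a *\<^sub>R x - y) \<bullet> h) / (1 - a))\<bar>
     \<le> (2 * pi * (1 - a)) powr (- real CARD('n) / 2) * ((norm h)\<^sup>2 / (1 - a))"
proof -
  define K where "K = (2 * pi * (1 - a)) powr (- real CARD('n) / 2)"
  define u where "u = y - sqrt a *\<^sub>R x"
  have b: "0 < 1 - a" using a1 by simp
  have shifted: "(norm (y + h - sqrt a *\<^sub>R x))\<^sup>2 = (norm u)\<^sup>2 + 2 * (u \<bullet> h) + (norm h)\<^sup>2"
  proof -
    have "y + h - sqrt a *\<^sub>R x = u + h" by (simp add: u_def algebra_simps)
    then show ?thesis
      by (simp only:) (simp add: power2_norm_eq_inner inner_add_left inner_add_right inner_commute)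
  qed
  have "(u \<bullet> h)\<^sup>2 \<le> (norm u)\<^sup>2 * (norm h)\<^sup>2"
    by (metis Cauchy_Schwarz_ineq power2_norm_eq_inner)
  then have T: "\<bar>exp (-((norm u)\<^sup>2 + 2*(u \<bullet> h) + (norm h)\<^sup>2)/(2*(1-a))) - exp (-(norm u)\<^sup>2/(2*(1-a)))
      + exp (-(norm u)\<^sup>2/(2*(1-a))) * (u \<bullet> h) / (1-a)\<bar> \<le> (norm h)\<^sup>2 / (1-a)"
    by (intro exp_neg_quadratic_taylor[OF b]) auto
  have unshifted: "(norm (y - sqrt a *\<^sub>R x))\<^sup>2 = (norm u)\<^sup>2"
    by (simp add: u_def)
  have linear: "(sqrt a *\<^sub>R x - y) \<bullet> h = - (u \<bullet> h)"
    by (simp add: u_def inner_diff_left)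
  have expand: "fwd_kernel a (y + h) x - fwd_kernel a y x - fwd_kernel a y x * (((sqrt a *\<^sub>R x - y) \<bullet> h) / (1 - a))
     = K * (exp (-((norm u)\<^sup>2 + 2*(u \<bullet> h) + (norm h)\<^sup>2)/(2*(1-a))) - exp (-(norm u)\<^sup>2/(2*(1-a)))
      + exp (-(norm u)\<^sup>2/(2*(1-a))) * (u \<bullet> h) / (1-a))"
    unfolding fwd_kernel_def gauss_iso_def K_def[symmetric] shifted unshifted linear
    by (simp add: algebra_simps)
  have "0 \<le> K" by (simp add: K_def)
  then show ?thesis
    unfolding expand K_def[symmetric] abs_mult abs_of_nonneg[OF \<open>0 \<le> K\<close>]
    by (rule mult_left_mono[OF T])
qed

section \<open>Moments of the joint density\<close>

lemma le_one_plus_square: "(t::real) \<le> 1 + t\<^sup>2"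
proof -
  have "2 * t \<le> t\<^sup>2 + 1" "0 \<le> t\<^sup>2"
    using sum_squares_bound[of t 1] by simp_all
  then show ?thesis by linarith
qed

lemma abs_vec_nth_le: "\<bar>(x::real^'n)$i\<bar> \<le> 1 + (norm x)\<^sup>2"
  using component_le_norm_cart[of x i] le_one_plus_square[of "norm x"] by linarith

lemma abs_vec_nth_mult_le: "\<bar>(x::real^'n)$i * y$j\<bar> \<le> (norm x)\<^sup>2 + (norm y)\<^sup>2"
proof -
  have "\<bar>x$i * y$j\<bar> \<le> norm x * norm y"
    using component_le_norm_cart[of x i] component_le_norm_cart[of y j]
    by (simp add: abs_mult mult_mono)
  moreover have "2 * (norm x * norm y) \<le> (norm x)\<^sup>2 + (norm y)\<^sup>2" "0 \<le> norm x * norm y"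
    using sum_squares_bound[of "norm x" "norm y"] by (simp_all add: mult.assoc)
  ultimately show ?thesis by linarith
qed

lemma abs_vec_nth_mult_self_le: "\<bar>(x::real^'n)$i * x$j\<bar> \<le> 1 + (norm x)\<^sup>2"
proof -
  have "\<bar>x$i * x$j\<bar> \<le> norm x * norm x"
    using component_le_norm_cart[of x i] component_le_norm_cart[of x j]
    by (simp add: abs_mult mult_mono)
  then show ?thesis
    by (simp add: power2_eq_square)
qed

lemma vec_nth_measurable [measurable]: "(\<lambda>x::real^'n. x$i) \<in> borel_measurable borel"
  by (intro borel_measurable_continuous_onI continuous_intros)

locale diffusion_marginal =
  fixes q0 :: "real^'n \<Rightarrow> real" and a :: real
  assumes density: "prob_density_2 q0" and a_pos: "0 < a" and a_less_1: "a < 1"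
begin

lemma q0_measurable [measurable]: "q0 \<in> borel_measurable borel"
  and q0_nonneg: "0 \<le> q0 x"
  and integrable_q0: "integrable lborel q0"
  and integral_q0: "(\<integral>x. q0 x \<partial>lborel) = 1"
  and integrable_q0_norm_sq: "integrable lborel (\<lambda>x. q0 x * (norm x)\<^sup>2)"
  using density by (simp_all add: prob_density_2_def)

lemma kernel_pos: "0 < fwd_kernel a y (x::real^'n)"
  using fwd_kernel_pos[OF a_less_1] .

abbreviation Z :: "real^'n \<Rightarrow> real" where "Z \<equiv> marg q0 a"

definition M :: "real^'n \<Rightarrow> 'n \<Rightarrow> real" where
  "M y i = (\<integral>x. q0 x * fwd_kernel a y x * x$i \<partial>lborel)"

definition S :: "real^'n \<Rightarrow> 'n \<Rightarrow> 'n \<Rightarrow> real" where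
  "S y i j = (\<integral>x. q0 x * fwd_kernel a y x * (x$i * x$j) \<partial>lborel)"

definition mu :: "'n \<Rightarrow> real" where
  "mu i = (\<integral>x. q0 x * x$i \<partial>lborel)"

definition Q :: "'n \<Rightarrow> 'n \<Rightarrow> real" where
  "Q i j = (\<integral>x. q0 x * (x$i * x$j) \<partial>lborel)"

definition J :: "'n \<Rightarrow> 'n \<Rightarrow> real" where
  "J i j = (\<integral>y. M y i * M y j / Z y \<partial>lborel)"

lemma Q_sym: "Q j i = Q i j"
  by (simp add: Q_def mult.commute)

lemma integrable_dominated_by_q0:
  fixes f h :: "real^'n \<Rightarrow> real"
  assumes [measurable]: "f \<in> borel_measurable borel" "h \<in> borel_measurable borel"
    and f: "\<And>x. \<bar>f x\<bar> \<le> c * q0 x" and h: "\<And>x. \<bar>h x\<bar> \<le> 1 + (norm x)\<^sup>2"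
  shows "integrable lborel (\<lambda>x. f x * h x)"
proof (rule Bochner_Integration.integrable_bound)
  show "integrable lborel (\<lambda>x. c * (q0 x + q0 x * (norm x)\<^sup>2))"
    using integrable_q0 integrable_q0_norm_sq by auto
  show "AE x in lborel. norm (f x * h x) \<le> norm (c * (q0 x + q0 x * (norm x)\<^sup>2))"
  proof (rule AE_I2)
    fix x
    have "\<bar>f x * h x\<bar> \<le> c * q0 x * (1 + (norm x)\<^sup>2)"
      unfolding abs_mult by (rule mult_mono[OF f h]) (use f[of x] in auto)
    also have "\<dots> \<le> \<bar>c * (q0 x + q0 x * (norm x)\<^sup>2)\<bar>"
      by (simp add: algebra_simps)
    finally show "norm (f x * h x) \<le> norm (c * (q0 x + q0 x * (norm x)\<^sup>2))" by simp
  qed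
qed simp

lemma integrable_scaleR_dominated_by_q0:
  fixes f :: "real^'n \<Rightarrow> real"
  assumes [measurable]: "f \<in> borel_measurable borel" and f: "\<And>x. \<bar>f x\<bar> \<le> c * q0 x"
  shows "integrable lborel (\<lambda>x. f x *\<^sub>R x)"
proof (rule Bochner_Integration.integrable_bound)
  show "integrable lborel (\<lambda>x. f x * (1 + (norm x)\<^sup>2))"
    by (rule integrable_dominated_by_q0[OF _ _ f]) auto
  show "AE x in lborel. norm (f x *\<^sub>R x) \<le> norm (f x * (1 + (norm x)\<^sup>2))"
    using le_one_plus_square by (auto simp: abs_mult intro!: mult_left_mono)
qed simp

definition kernel_max :: real where
  "kernel_max = (2 * pi * (1 - a)) powr (- real CARD('n) / 2)"

lemma abs_q0_mult_kernel_le: "\<bar>q0 x * fwd_kernel a y x\<bar> \<le> kernel_max * q0 x"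
  using q0_nonneg[of x] kernel_pos[of y x] fwd_kernel_le[OF a_less_1, of y x]
  by (simp add: abs_mult kernel_max_def mult.commute mult_left_mono)

lemma integrable_q0_kernel_mult:
  assumes [measurable]: "h \<in> borel_measurable borel" and "\<And>x. \<bar>h x\<bar> \<le> 1 + (norm x)\<^sup>2"
  shows "integrable lborel (\<lambda>x. q0 x * fwd_kernel a y x * h x)"
  by (rule integrable_dominated_by_q0[OF _ _ abs_q0_mult_kernel_le]) (use assms in auto)

lemma integrable_q0_kernel: "integrable lborel (\<lambda>x. q0 x * fwd_kernel a y x)"
  using integrable_q0_kernel_mult[of "\<lambda>x. 1" y] by simp

lemma integrable_q0_kernel_vec_nth: "integrable lborel (\<lambda>x. q0 x * fwd_kernel a y x * x$i)"
  by (rule integrable_q0_kernel_mult) (auto intro: abs_vec_nth_le)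

lemma integrable_q0_kernel_vec_nth_mult:
  "integrable lborel (\<lambda>x. q0 x * fwd_kernel a y x * (x$i * x$j))"
  by (intro integrable_q0_kernel_mult) (auto intro: abs_vec_nth_mult_self_le)

lemma integrable_q0_vec_nth: "integrable lborel (\<lambda>x. q0 x * x$i)"
  by (rule integrable_dominated_by_q0[where c=1]) (auto intro: abs_vec_nth_le simp: q0_nonneg)

lemma integrable_q0_vec_nth_mult: "integrable lborel (\<lambda>x. q0 x * (x$i * x$j))"
  by (intro integrable_dominated_by_q0[where c=1]) (auto intro: abs_vec_nth_mult_self_le simp: q0_nonneg)

lemma integrable_joint_weight:
  "integrable (lborel \<Otimes>\<^sub>M lborel)
     (\<lambda>(x, y). q0 x * fwd_kernel a y x * (1 + (norm x)\<^sup>2 + (norm y)\<^sup>2))"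
proof -
  define H where "H = (\<lambda>(x, y). q0 x * fwd_kernel a y x * (1 + (norm x)\<^sup>2 + (norm y)\<^sup>2))"
  have a: "0 \<le> a" "a < 1" using a_pos a_less_1 by simp_all
  have H_section: "(\<lambda>y. H (x, y)) = (\<lambda>y. q0 x * (1 + (norm x)\<^sup>2) * fwd_kernel a y x
      + q0 x * (fwd_kernel a y x * (norm y)\<^sup>2))" for x
    by (simp add: H_def fun_eq_iff algebra_simps)
  have H_section_integral: "(\<integral>y. H (x, y) \<partial>lborel)
      = q0 x * (1 + (norm x)\<^sup>2) + q0 x * (a * (norm x)\<^sup>2 + real CARD('n) * (1 - a))" for x
    unfolding H_section by (simp add: fwd_kernel_moment0[OF a(2)] fwd_kernel_norm_sq_moment[OF a])
  have "norm (H (x, y)) = H (x, y)" for x y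
    unfolding H_def using q0_nonneg[of x] kernel_pos[of y x] by simp
  then have "(\<integral>y. norm (H (x, y)) \<partial>lborel)
      = q0 x * (1 + (norm x)\<^sup>2) + q0 x * (a * (norm x)\<^sup>2 + real CARD('n) * (1 - a))" for x
    using H_section_integral by simp
  moreover have "integrable lborel
      (\<lambda>x. q0 x * (1 + (norm x)\<^sup>2) + q0 x * (a * (norm x)\<^sup>2 + real CARD('n) * (1 - a)))"
    using integrable_q0 integrable_q0_norm_sq by (auto simp: distrib_left algebra_simps)
  moreover have "integrable lborel (\<lambda>y. H (x, y))" for x
    unfolding H_section
    by (intro Bochner_Integration.integrable_add integrable_mult_right
        fwd_kernel_moment0(1)[OF a(2)] fwd_kernel_norm_sq_moment(1)[OF a])
  ultimately have "integrable (lborel \<Otimes>\<^sub>M lborel) H"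
    by (intro lborel_pair.Fubini_integrable) (auto simp: H_def)
  then show ?thesis by (simp add: H_def)
qed

lemma integrable_joint:
  assumes [measurable]: "(\<lambda>p. h (fst p) (snd p)) \<in> borel_measurable (lborel \<Otimes>\<^sub>M lborel)"
    and h: "\<And>x y. \<bar>h x y\<bar> \<le> 1 + (norm x)\<^sup>2 + (norm y)\<^sup>2"
  shows "integrable (lborel \<Otimes>\<^sub>M lborel) (\<lambda>(x, y). q0 x * fwd_kernel a y x * h x y)"
proof (rule Bochner_Integration.integrable_bound[OF integrable_joint_weight])
  have "(\<lambda>p :: (real^'n) \<times> (real^'n). q0 (fst p) * fwd_kernel a (snd p) (fst p) * h (fst p) (snd p))
      \<in> borel_measurable (lborel \<Otimes>\<^sub>M lborel)"
    by measurable
  then show "(\<lambda>(x, y). q0 x * fwd_kernel a y x * h x y) \<in> borel_measurable (lborel \<Otimes>\<^sub>M lborel)"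
    by (simp add: split_beta')
  show "AE p in lborel \<Otimes>\<^sub>M lborel. norm ((\<lambda>(x, y). q0 x * fwd_kernel a y x * h x y) p)
      \<le> norm ((\<lambda>(x, y). q0 x * fwd_kernel a y x * (1 + (norm x)\<^sup>2 + (norm y)\<^sup>2)) p)"
  proof (rule AE_I2, clarify)
    fix x y :: "real^'n"
    have "0 \<le> q0 x * fwd_kernel a y x"
      using q0_nonneg[of x] kernel_pos[of y x] by simp
    then show "norm (q0 x * fwd_kernel a y x * h x y)
        \<le> norm (q0 x * fwd_kernel a y x * (1 + (norm x)\<^sup>2 + (norm y)\<^sup>2))"
      using h[of x y] by (simp add: abs_mult mult_left_mono)
  qed
qed

lemma joint_integral_swap:
  assumes "(\<lambda>p. h (fst p) (snd p)) \<in> borel_measurable (lborel \<Otimes>\<^sub>M lborel)"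
    and "\<And>x y. \<bar>h x y\<bar> \<le> 1 + (norm x)\<^sup>2 + (norm y)\<^sup>2"
  shows "integrable lborel (\<lambda>y. \<integral>x. q0 x * fwd_kernel a y x * h x y \<partial>lborel)"
    and "(\<integral>y. \<integral>x. q0 x * fwd_kernel a y x * h x y \<partial>lborel \<partial>lborel)
         = (\<integral>x. q0 x * (\<integral>y. fwd_kernel a y x * h x y \<partial>lborel) \<partial>lborel)"
proof -
  note joint = integrable_joint[OF assms]
  show "integrable lborel (\<lambda>y. \<integral>x. q0 x * fwd_kernel a y x * h x y \<partial>lborel)"
    using lborel_pair.integrable_snd[OF joint] .
  show "(\<integral>y. \<integral>x. q0 x * fwd_kernel a y x * h x y \<partial>lborel \<partial>lborel)
      = (\<integral>x. q0 x * (\<integral>y. fwd_kernel a y x * h x y \<partial>lborel) \<partial>lborel)"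
    using lborel_pair.Fubini_integral[OF joint] by (simp add: mult.assoc)
qed

lemma integral_marg: "integrable lborel Z" "(\<integral>y. Z y \<partial>lborel) = 1"
  using joint_integral_swap[of "\<lambda>x y. 1"]
  by (simp_all add: marg_def[abs_def] integral_q0 fwd_kernel_moment0[OF a_less_1])

lemma integral_M: "integrable lborel (\<lambda>y. M y i)" "(\<integral>y. M y i \<partial>lborel) = mu i"
proof -
  have bound: "\<bar>x$i\<bar> \<le> 1 + (norm x)\<^sup>2 + (norm y)\<^sup>2" for x y :: "real^'n"
    using abs_vec_nth_le[of x i] zero_le_power2[of "norm y"] by linarith
  have "(\<lambda>p :: (real^'n) \<times> (real^'n). fst p $ i) \<in> borel_measurable (lborel \<Otimes>\<^sub>M lborel)"
    by measurable
  note swap = joint_integral_swap[of "\<lambda>x y. x$i", OF this bound]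
  show "integrable lborel (\<lambda>y. M y i)"
    unfolding M_def by (rule swap(1))
  have "(\<integral>y. M y i \<partial>lborel) = (\<integral>x. q0 x * ((\<integral>y. fwd_kernel a y x \<partial>lborel) * x$i) \<partial>lborel)"
    unfolding M_def by (simp add: swap(2))
  then show "(\<integral>y. M y i \<partial>lborel) = mu i"
    by (simp add: mu_def fwd_kernel_moment0[OF a_less_1])
qed

lemma integral_S: "integrable lborel (\<lambda>y. S y i j)" "(\<integral>y. S y i j \<partial>lborel) = Q i j"
proof -
  have bound: "\<bar>x$i * x$j\<bar> \<le> 1 + (norm x)\<^sup>2 + (norm y)\<^sup>2" for x y :: "real^'n"
    using abs_vec_nth_mult_self_le[of x i j] zero_le_power2[of "norm y"] by linarith
  have "(\<lambda>p :: (real^'n) \<times> (real^'n). fst p $ i * fst p $ j) \<in> borel_measurable (lborel \<Otimes>\<^sub>M lborel)"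
    by measurable
  note swap = joint_integral_swap[of "\<lambda>x y. x$i * x$j", OF this bound]
  show "integrable lborel (\<lambda>y. S y i j)"
    unfolding S_def by (rule swap(1))
  have "(\<integral>y. S y i j \<partial>lborel)
      = (\<integral>x. q0 x * ((\<integral>y. fwd_kernel a y x \<partial>lborel) * (x$i * x$j)) \<partial>lborel)"
    unfolding S_def by (simp add: swap(2))
  then show "(\<integral>y. S y i j \<partial>lborel) = Q i j"
    by (simp add: Q_def fwd_kernel_moment0[OF a_less_1])
qed

lemma integral_vec_nth_mult_M:
  "integrable lborel (\<lambda>y. y$j * M y i)" "(\<integral>y. y$j * M y i \<partial>lborel) = sqrt a * Q i j"
proof -
  have bound: "\<bar>x$i * y$j\<bar> \<le> 1 + (norm x)\<^sup>2 + (norm y)\<^sup>2" for x y :: "real^'n"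
    using abs_vec_nth_mult_le[of x i y j] by simp
  have "(\<lambda>p :: (real^'n) \<times> (real^'n). fst p $ i * snd p $ j) \<in> borel_measurable (lborel \<Otimes>\<^sub>M lborel)"
    by measurable
  note swap = joint_integral_swap[of "\<lambda>x y. x$i * y$j", OF this bound]
  have eq: "(\<lambda>y. y$j * M y i) = (\<lambda>y. \<integral>x. q0 x * fwd_kernel a y x * (x$i * y$j) \<partial>lborel)"
    by (simp add: M_def fun_eq_iff mult_ac flip: integral_mult_right_zero)
  show "integrable lborel (\<lambda>y. y$j * M y i)"
    unfolding eq by (rule swap(1))
  have inner: "(\<integral>y. fwd_kernel a y x * (x$i * y$j) \<partial>lborel) = x$i * (sqrt a * x$j)" for x
  proof -
    have "(\<integral>y. fwd_kernel a y x * (x$i * y$j) \<partial>lborel) = (\<integral>y. x$i * (fwd_kernel a y x * y$j) \<partial>lborel)"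
      by (simp add: mult_ac)
    then show ?thesis
      by (simp add: fwd_kernel_moment1(2)[OF a_less_1])
  qed
  have "(\<integral>y. y$j * M y i \<partial>lborel) = (\<integral>x. sqrt a * (q0 x * (x$i * x$j)) \<partial>lborel)"
    unfolding eq swap(2) inner by (simp add: mult_ac)
  then show "(\<integral>y. y$j * M y i \<partial>lborel) = sqrt a * Q i j"
    by (simp add: Q_def)
qed

lemma integral_vec_nth_mult_marg:
  "integrable lborel (\<lambda>y. y$i * y$j * Z y)"
  "(\<integral>y. y$i * y$j * Z y \<partial>lborel) = a * Q i j + (if i = j then 1 - a else 0)"
proof -
  have bound: "\<bar>y$i * y$j\<bar> \<le> 1 + (norm x)\<^sup>2 + (norm y)\<^sup>2" for x y :: "real^'n"
    using abs_vec_nth_mult_self_le[of y i j] zero_le_power2[of "norm x"] by linarith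
  have "(\<lambda>p :: (real^'n) \<times> (real^'n). snd p $ i * snd p $ j) \<in> borel_measurable (lborel \<Otimes>\<^sub>M lborel)"
    by measurable
  note swap = joint_integral_swap[of "\<lambda>x y. y$i * y$j", OF this bound]
  have eq: "(\<lambda>y. y$i * y$j * Z y) = (\<lambda>y. \<integral>x. q0 x * fwd_kernel a y x * (y$i * y$j) \<partial>lborel)"
    by (simp add: marg_def fun_eq_iff mult_ac flip: integral_mult_right_zero)
  show "integrable lborel (\<lambda>y. y$i * y$j * Z y)"
    unfolding eq by (rule swap(1))
  have "(\<integral>y. y$i * y$j * Z y \<partial>lborel)
      = (\<integral>x. q0 x * (a * (x$i * x$j) + (if i = j then 1 - a else 0)) \<partial>lborel)"
    unfolding eq swap(2)
    by (simp only: fwd_kernel_moment2(2)[OF less_imp_le[OF a_pos] a_less_1])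
  also have "\<dots> = (\<integral>x. a * (q0 x * (x$i * x$j)) + (if i = j then 1 - a else 0) * q0 x \<partial>lborel)"
    by (simp add: algebra_simps)
  also have "\<dots> = a * Q i j + (if i = j then 1 - a else 0)"
    using integrable_q0_vec_nth_mult[of i j] integrable_q0 integral_q0 by (simp add: Q_def)
  finally show "(\<integral>y. y$i * y$j * Z y \<partial>lborel) = a * Q i j + (if i = j then 1 - a else 0)" .
qed

section \<open>The posterior\<close>

lemma marg_pos: "0 < Z y"
proof -
  have "0 \<le> Z y"
    unfolding marg_def using q0_nonneg kernel_pos
    by (intro Bochner_Integration.integral_nonneg) (simp add: less_imp_le)
  moreover have "Z y \<noteq> 0"
  proof
    assume "Z y = 0"
    then have "AE x in lborel. q0 x * fwd_kernel a y x = 0"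
      unfolding marg_def using q0_nonneg kernel_pos integrable_q0_kernel[of y]
      by (subst (asm) integral_nonneg_eq_0_iff_AE) (auto simp: less_imp_le)
    then have "AE x in lborel. q0 x = 0"
      by eventually_elim (metis kernel_pos less_irrefl mult_eq_0_iff)
    then have "(\<integral>x. q0 x \<partial>lborel) = 0"
      by (rule integral_eq_zero_AE)
    then show False using integral_q0 by simp
  qed
  ultimately show ?thesis by simp
qed

lemma post_mean: "dmean (post q0 a y) $ i = M y i / Z y"
proof -
  have "\<bar>post q0 a y x\<bar> \<le> kernel_max / Z y * q0 x" for x
  proof -
    have "\<bar>post q0 a y x\<bar> = \<bar>q0 x * fwd_kernel a y x\<bar> / Z y"
      using marg_pos[of y] by (simp add: post_def abs_div)
    also have "\<dots> \<le> kernel_max * q0 x / Z y"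
      using abs_q0_mult_kernel_le[of x y] marg_pos[of y] by (simp add: divide_right_mono)
    finally show ?thesis by simp
  qed
  moreover have "post q0 a y \<in> borel_measurable borel"
    unfolding post_def by measurable
  ultimately have "integrable lborel (\<lambda>x. post q0 a y x *\<^sub>R x)"
    by (intro integrable_scaleR_dominated_by_q0)
  then have "dmean (post q0 a y) $ i = (\<integral>x. (post q0 a y x *\<^sub>R x) $ i \<partial>lborel)"
    unfolding dmean_def by (rule integral_bounded_linear[OF bounded_linear_vec_nth, symmetric])
  also have "\<dots> = M y i / Z y"
    by (simp add: post_def M_def)
  finally show ?thesis .
qed

lemma post_cov: "dcov (post q0 a y) i j = S y i j / Z y - M y i * M y j / (Z y)\<^sup>2"
proof -
  define mi where "mi = M y i / Z y"
  define mj where "mj = M y j / Z y"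
  have Z: "Z y \<noteq> 0" using marg_pos[of y] by simp
  have expand: "(\<lambda>x. post q0 a y x * ((x$i - dmean (post q0 a y) $ i) * (x$j - dmean (post q0 a y) $ j)))
    = (\<lambda>x. (1 / Z y) * (q0 x * fwd_kernel a y x * (x$i * x$j))
         - (mj / Z y) * (q0 x * fwd_kernel a y x * x$i)
         - (mi / Z y) * (q0 x * fwd_kernel a y x * x$j)
         + (mi * mj / Z y) * (q0 x * fwd_kernel a y x))"
    using Z by (simp add: fun_eq_iff post_def post_mean mi_def[symmetric] mj_def[symmetric] field_simps)
  have "dcov (post q0 a y) i j
      = (1 / Z y) * S y i j - (mj / Z y) * M y i - (mi / Z y) * M y j + (mi * mj / Z y) * Z y"
    unfolding dcov_def expand
    using integrable_q0_kernel[of y] integrable_q0_kernel_vec_nth[of y]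
      integrable_q0_kernel_vec_nth_mult[of y]
    by (simp add: S_def M_def marg_def)
  also have "\<dots> = S y i j / Z y - M y i * M y j / (Z y)\<^sup>2"
    using Z by (simp add: mi_def mj_def field_simps power2_eq_square)
  finally show ?thesis .
qed

lemma M_sq_div_marg_le_S: "(M y i)\<^sup>2 / Z y \<le> S y i i"
proof -
  have "0 \<le> dcov (post q0 a y) i i"
    unfolding dcov_def post_def using q0_nonneg kernel_pos marg_pos
    by (intro Bochner_Integration.integral_nonneg) (simp add: less_imp_le)
  then have "0 \<le> (S y i i / Z y - M y i * M y i / (Z y)\<^sup>2) * Z y"
    using marg_pos[of y] by (simp add: post_cov)
  also have "\<dots> = S y i i - (M y i)\<^sup>2 / Z y"
    using marg_pos[of y] by (simp add: field_simps power2_eq_square)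
  finally show ?thesis by simp
qed

lemma integrable_M_mult_M_div_marg: "integrable lborel (\<lambda>y. M y i * M y j / Z y)"
proof (rule Bochner_Integration.integrable_bound)
  show "integrable lborel (\<lambda>y. S y i i + S y j j)"
    using integral_S(1)[of i i] integral_S(1)[of j j] by auto
  have [measurable]: "(\<lambda>y. M y k) \<in> borel_measurable borel" for k
    using borel_measurable_integrable[OF integral_M(1)[of k]] by simp
  have [measurable]: "Z \<in> borel_measurable borel"
    using borel_measurable_integrable[OF integral_marg(1)] by simp
  show "(\<lambda>y. M y i * M y j / Z y) \<in> borel_measurable lborel" by simp
  show "AE y in lborel. norm (M y i * M y j / Z y) \<le> norm (S y i i + S y j j)"
  proof (rule AE_I2)
    fix y
    have "2 * \<bar>M y i * M y j\<bar> \<le> (M y i)\<^sup>2 + (M y j)\<^sup>2"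
      using sum_squares_bound[of "\<bar>M y i\<bar>" "\<bar>M y j\<bar>"] by (simp add: abs_mult mult.assoc)
    then have "\<bar>M y i * M y j\<bar> \<le> (M y i)\<^sup>2 + (M y j)\<^sup>2"
      using abs_ge_zero[of "M y i * M y j"] by linarith
    then have "\<bar>M y i * M y j / Z y\<bar> \<le> (M y i)\<^sup>2 / Z y + (M y j)\<^sup>2 / Z y"
      using marg_pos[of y] by (simp add: abs_div add_divide_distrib[symmetric] divide_right_mono)
    also have "\<dots> \<le> S y i i + S y j j"
      using M_sq_div_marg_le_S[of y i] M_sq_div_marg_le_S[of y j] by simp
    finally show "norm (M y i * M y j / Z y) \<le> norm (S y i i + S y j j)" by simp
  qed
qed

section \<open>Tweedie's formula\<close>

definition grad_marg :: "real^'n \<Rightarrow> real^'n" where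
  "grad_marg y = (\<chi> l. (sqrt a * M y l - y$l * Z y) / (1 - a))"

lemma integral_kernel_linear_term:
  fixes y h :: "real^'n"
  shows "integrable lborel (\<lambda>x. q0 x * fwd_kernel a y x * (((sqrt a *\<^sub>R x - y) \<bullet> h) / (1 - a)))"
    and "(\<integral>x. q0 x * fwd_kernel a y x * (((sqrt a *\<^sub>R x - y) \<bullet> h) / (1 - a)) \<partial>lborel)
         = grad_marg y \<bullet> h"
proof -
  have expand: "(\<lambda>x. q0 x * fwd_kernel a y x * (((sqrt a *\<^sub>R x - y) \<bullet> h) / (1 - a)))
    = (\<lambda>x. \<Sum>l\<in>UNIV. (h$l / (1 - a)) *
        (sqrt a * (q0 x * fwd_kernel a y x * x$l) - y$l * (q0 x * fwd_kernel a y x)))"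
    by (simp add: fun_eq_iff inner_vec_def sum_distrib_left sum_divide_distrib
        algebra_simps diff_divide_distrib)
  show "integrable lborel (\<lambda>x. q0 x * fwd_kernel a y x * (((sqrt a *\<^sub>R x - y) \<bullet> h) / (1 - a)))"
    unfolding expand using integrable_q0_kernel[of y] integrable_q0_kernel_vec_nth[of y] by auto
  have "(\<integral>x. q0 x * fwd_kernel a y x * (((sqrt a *\<^sub>R x - y) \<bullet> h) / (1 - a)) \<partial>lborel)
      = (\<Sum>l\<in>UNIV. (h$l / (1 - a)) * (sqrt a * M y l - y$l * Z y))"
    unfolding expand using integrable_q0_kernel[of y] integrable_q0_kernel_vec_nth[of y]
    by (subst Bochner_Integration.integral_sum) (auto simp: M_def marg_def)
  also have "\<dots> = grad_marg y \<bullet> h"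
    by (simp add: grad_marg_def inner_vec_def mult_ac)
  finally show "(\<integral>x. q0 x * fwd_kernel a y x * (((sqrt a *\<^sub>R x - y) \<bullet> h) / (1 - a)) \<partial>lborel)
      = grad_marg y \<bullet> h" .
qed

lemma marg_taylor:
  fixes y h :: "real^'n"
  shows "\<bar>Z (y + h) - Z y - grad_marg y \<bullet> h\<bar> \<le> kernel_max * ((norm h)\<^sup>2 / (1 - a))"
proof -
  define R where "R x = fwd_kernel a (y + h) x - fwd_kernel a y x
      - fwd_kernel a y x * (((sqrt a *\<^sub>R x - y) \<bullet> h) / (1 - a))" for x
  define C where "C = kernel_max * ((norm h)\<^sup>2 / (1 - a))"
  note linear = integral_kernel_linear_term[of y h]
  have "Z (y + h) - Z y - grad_marg y \<bullet> h = (\<integral>x. q0 x * R x \<partial>lborel)"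
    unfolding marg_def linear(2)[symmetric] R_def
    using integrable_q0_kernel[of "y + h"] integrable_q0_kernel[of y] linear(1)
    by (simp add: right_diff_distrib mult.assoc)
  also have "\<bar>\<dots>\<bar> \<le> (\<integral>x. q0 x * C \<partial>lborel)"
  proof (rule integral_abs_bound_integral)
    show "integrable lborel (\<lambda>x. q0 x * R x)"
      unfolding R_def using integrable_q0_kernel[of "y + h"] integrable_q0_kernel[of y] linear(1)
      by (simp add: right_diff_distrib mult.assoc)
    show "integrable lborel (\<lambda>x. q0 x * C)"
      using integrable_q0 by simp
    show "\<bar>q0 x * R x\<bar> \<le> q0 x * C" for x
      unfolding abs_mult abs_of_nonneg[OF q0_nonneg] C_def kernel_max_def R_def
      using fwd_kernel_taylor[OF a_less_1, of y h x] q0_nonneg[of x] by (rule mult_left_mono)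
  qed
  also have "(\<integral>x. q0 x * C \<partial>lborel) = C"
    using integral_q0 by simp
  finally show ?thesis by (simp add: C_def)
qed

lemma marg_has_derivative: "(Z has_derivative (\<lambda>h. grad_marg y \<bullet> h)) (at y)"
  unfolding has_derivative_at'
proof (intro conjI allI impI)
  show "bounded_linear (\<lambda>h. grad_marg y \<bullet> h)"
    by (rule bounded_linear_inner_right)
  fix e :: real
  assume e: "0 < e"
  define C where "C = kernel_max / (1 - a)"
  have C: "0 < C" using a_less_1 by (simp add: C_def kernel_max_def)
  show "\<exists>d>0. \<forall>x'. 0 < norm (x' - y) \<and> norm (x' - y) < d \<longrightarrow>
      norm (Z x' - Z y - grad_marg y \<bullet> (x' - y)) / norm (x' - y) < e"
  proof (intro exI[of _ "e / C"] conjI allI impI)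
    show "0 < e / C" using e C by simp
    fix x'
    assume x': "0 < norm (x' - y) \<and> norm (x' - y) < e / C"
    have "\<bar>Z x' - Z y - grad_marg y \<bullet> (x' - y)\<bar> \<le> C * (norm (x' - y))\<^sup>2"
      using marg_taylor[of y "x' - y"] by (simp add: C_def)
    then have "norm (Z x' - Z y - grad_marg y \<bullet> (x' - y)) / norm (x' - y) \<le> C * norm (x' - y)"
      using x' by (simp add: divide_le_eq power2_eq_square mult_ac)
    also have "\<dots> < e" using x' C by (simp add: field_simps)
    finally show "norm (Z x' - Z y - grad_marg y \<bullet> (x' - y)) / norm (x' - y) < e" .
  qed
qed

lemma score_eq: "score q0 a y $ j = (sqrt a * M y j - y$j * Z y) / ((1 - a) * Z y)"
proof -
  have "((\<lambda>x. ln (Z x)) has_derivative (\<lambda>h. (grad_marg y \<bullet> h) * inverse (Z y))) (at y)"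
    by (rule has_derivative_ln[OF marg_pos marg_has_derivative])
  then have "frechet_derivative (\<lambda>x. ln (Z x)) (at y) = (\<lambda>h. (grad_marg y \<bullet> h) * inverse (Z y))"
    by (rule frechet_derivative_at[symmetric])
  then show ?thesis
    unfolding score_def grad_def by (simp add: grad_marg_def inner_axis divide_inverse mult_ac)
qed

section \<open>Expectations over the marginal\<close>

lemma expected_post_cov: "dexp Z (\<lambda>y. dcov (post q0 a y) i j) = Q i j - J i j"
proof -
  have "Z y * dcov (post q0 a y) i j = S y i j - M y i * M y j / Z y" for y
    using marg_pos[of y] by (simp add: post_cov field_simps power2_eq_square)
  then show ?thesis
    unfolding dexp_def using integral_S[of i j] integrable_M_mult_M_div_marg[of i j]
    by (simp add: J_def)
qed

lemma marg_mult_score_outer: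
  "Z y * (score q0 a y $ i * score q0 a y $ j)
   = (a * (M y i * M y j / Z y) - sqrt a * (y$j * M y i) - sqrt a * (y$i * M y j)
      + y$i * y$j * Z y) / (1 - a)\<^sup>2"
proof -
  have Z: "Z y \<noteq> 0" and b: "1 - a \<noteq> 0" and sqrt_a: "sqrt a * sqrt a = a"
    using marg_pos[of y] a_pos a_less_1 by auto
  have "\<And>A B c :: real. c \<noteq> 0 \<Longrightarrow> Z y * (A / (c * Z y) * (B / (c * Z y))) = (A * B / Z y) / c\<^sup>2"
    using Z by (simp add: field_simps power2_eq_square)
  then have "\<And>A B :: real. Z y * (A / ((1 - a) * Z y) * (B / ((1 - a) * Z y))) = (A * B / Z y) / (1 - a)\<^sup>2"
    using b by blast
  moreover have "(sqrt a * M y i - y$i * Z y) * (sqrt a * M y j - y$j * Z y) / Z y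
      = a * (M y i * M y j / Z y) - sqrt a * (y$j * M y i) - sqrt a * (y$i * M y j) + y$i * y$j * Z y"
    using Z sqrt_a by (simp add: field_simps power2_eq_square)
  ultimately show ?thesis
    by (simp only: score_eq)
qed

lemma expected_score_outer:
  "dexp Z (\<lambda>y. score q0 a y $ i * score q0 a y $ j)
   = (a * J i j - a * Q i j + (if i = j then 1 - a else 0)) / (1 - a)\<^sup>2"
proof -
  define g1 where "g1 y = M y i * M y j / Z y" for y
  define g2 where "g2 y = y$j * M y i" for y
  define g3 where "g3 y = y$i * M y j" for y
  define g4 where "g4 y = y$i * y$j * Z y" for y
  have "dexp Z (\<lambda>y. score q0 a y $ i * score q0 a y $ j)
      = (\<integral>y. (a * g1 y - sqrt a * g2 y - sqrt a * g3 y + g4 y) / (1 - a)\<^sup>2 \<partial>lborel)"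
    unfolding dexp_def marg_mult_score_outer g1_def g2_def g3_def g4_def ..
  also have "\<dots> = (a * J i j - sqrt a * (sqrt a * Q i j) - sqrt a * (sqrt a * Q j i)
      + (a * Q i j + (if i = j then 1 - a else 0))) / (1 - a)\<^sup>2"
  proof -
    have "integrable lborel g1" "integrable lborel g2" "integrable lborel g3" "integrable lborel g4"
      unfolding g1_def g2_def g3_def g4_def
      using integrable_M_mult_M_div_marg integral_vec_nth_mult_M(1) integral_vec_nth_mult_marg(1)
      by auto
    moreover have "integral\<^sup>L lborel g1 = J i j" "integral\<^sup>L lborel g2 = sqrt a * Q i j"
      "integral\<^sup>L lborel g3 = sqrt a * Q j i"
      "integral\<^sup>L lborel g4 = a * Q i j + (if i = j then 1 - a else 0)"
      unfolding g1_def g2_def g3_def g4_def J_def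
      using integral_vec_nth_mult_M(2) integral_vec_nth_mult_marg(2) by auto
    ultimately show ?thesis by simp
  qed
  also have "\<dots> = (a * J i j - a * Q i j + (if i = j then 1 - a else 0)) / (1 - a)\<^sup>2"
    using a_pos by (simp add: Q_sym mult.assoc[symmetric])
  finally show ?thesis .
qed

lemma expected_post_cov_eq_score:
  "dexp Z (\<lambda>y. dcov (post q0 a y) i j)
   = (1 - a) / a * ((if i = j then 1 else 0)
       - (1 - a) * dexp Z (\<lambda>y. score q0 a y $ i * score q0 a y $ j))"
proof -
  have identity: "\<And>a b q p d :: real. a \<noteq> 0 \<Longrightarrow> b \<noteq> 0 \<Longrightarrow>
      q - p = b / a * (d - b * ((a * p - a * q + b * d) / b\<^sup>2))"
    by (simp add: field_simps power2_eq_square)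
  have "(if i = j then 1 - a else 0) = (1 - a) * (if i = j then 1 else (0::real))"
    by simp
  then show ?thesis
    unfolding expected_post_cov expected_score_outer
    by (simp only:) (rule identity, use a_pos a_less_1 in auto)
qed

lemma dmean_q0: "dmean q0 $ i = mu i"
proof -
  have "integrable lborel (\<lambda>x. q0 x *\<^sub>R x)"
    by (rule integrable_scaleR_dominated_by_q0[where c=1]) (auto simp: q0_nonneg)
  then have "dmean q0 $ i = (\<integral>x. (q0 x *\<^sub>R x) $ i \<partial>lborel)"
    unfolding dmean_def by (rule integral_bounded_linear[OF bounded_linear_vec_nth, symmetric])
  then show ?thesis
    by (simp add: mu_def)
qed

lemma dcov_q0: "dcov q0 i j = Q i j - mu i * mu j"
proof -
  have "(\<lambda>x. q0 x * ((x$i - dmean q0 $ i) * (x$j - dmean q0 $ j)))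
      = (\<lambda>x. q0 x * (x$i * x$j) - mu j * (q0 x * x$i) - mu i * (q0 x * x$j) + (mu i * mu j) * q0 x)"
    by (simp add: fun_eq_iff dmean_q0 algebra_simps)
  then show ?thesis
    unfolding dcov_def
    using integrable_q0_vec_nth_mult[of i j] integrable_q0_vec_nth[of i] integrable_q0_vec_nth[of j]
      integrable_q0 integral_q0
    by (simp add: Q_def mu_def[symmetric])
qed

lemma expected_post_mean: "dexpv Z (\<lambda>y. dmean (post q0 a y)) $ i = mu i"
proof -
  have eq: "Z y *\<^sub>R dmean (post q0 a y) = (\<Sum>l\<in>UNIV. M y l *\<^sub>R axis l 1)" for y
    using marg_pos[of y]
    by (simp add: vec_eq_iff post_mean sum_component axis_def if_distrib cong: if_cong)
  have "integrable lborel (\<lambda>y. \<Sum>l\<in>UNIV. M y l *\<^sub>R (axis l 1 :: real^'n))"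
    using integral_M(1) by auto
  then have "dexpv Z (\<lambda>y. dmean (post q0 a y)) $ i
      = (\<integral>y. (\<Sum>l\<in>UNIV. M y l *\<^sub>R (axis l 1 :: real^'n)) $ i \<partial>lborel)"
    unfolding dexpv_def eq by (rule integral_bounded_linear[OF bounded_linear_vec_nth, symmetric])
  also have "\<dots> = (\<integral>y. M y i \<partial>lborel)"
    by (simp add: sum_component axis_def if_distrib cong: if_cong)
  finally show ?thesis
    using integral_M(2) by simp
qed

lemma cov_post_mean: "dcov_fun Z (\<lambda>y. dmean (post q0 a y)) i j = J i j - mu i * mu j"
proof -
  have "Z y * ((dmean (post q0 a y) $ i - mu i) * (dmean (post q0 a y) $ j - mu j))
      = M y i * M y j / Z y - mu j * M y i - mu i * M y j + (mu i * mu j) * Z y" for y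
    using marg_pos[of y] by (simp add: post_mean field_simps)
  then show ?thesis
    unfolding dcov_fun_def expected_post_mean
    using integrable_M_mult_M_div_marg[of i j] integral_M[of i] integral_M[of j] integral_marg
    by (simp add: J_def)
qed

lemma law_of_total_covariance:
  "dcov q0 i j = dexp Z (\<lambda>y. dcov (post q0 a y) i j) + dcov_fun Z (\<lambda>y. dmean (post q0 a y)) i j"
  unfolding dcov_q0 expected_post_cov cov_post_mean by simp

end

theorem proposition1:
  fixes q0 :: "real^'n \<Rightarrow> real" and abar :: real
  assumes "prob_density_2 q0"
    and "0 < abar" and "abar < 1"
  defines "bbar \<equiv> 1 - abar"
  shows "(\<forall>i j.
      dexp (marg q0 abar) (\<lambda>xn. dcov (post q0 abar xn) i j)
      = bbar / abar * ((if i = j then 1 else 0)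
          - bbar * dexp (marg q0 abar) (\<lambda>xn. score q0 abar xn $ i * score q0 abar xn $ j)))
    \<and> (\<forall>i j.
      dcov q0 i j
      = dexp (marg q0 abar) (\<lambda>xn. dcov (post q0 abar xn) i j)
        + dcov_fun (marg q0 abar) (\<lambda>xn. dmean (post q0 abar xn)) i j)"
proof -
  interpret diffusion_marginal q0 abar
    using assms by unfold_locales
  show ?thesis
    unfolding bbar_def using expected_post_cov_eq_score law_of_total_covariance by blast
qed

end
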